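(* Let $\eta\in C^1_c(\mathbb R^n)$ with $\eta=1$ on $B_1$, $\eta=0$ on $\mathbb R^n\setminus B_2$, $0\le\eta\le1$ and $\|\nabla\eta\|_\infty\le2$, and for $k\in\mathbb N$ let $\eta_k(x)=\eta(x/k)$. Let $p\in(1,\infty)$, $s\in(0,1)$, $u\in L^p(\mathbb R^n)$ and $u_k=\eta_ku$. Then $$J^1_{s,p}(u_k)\le C(n,p)\left(J^1_{s,p}(u)+\|u\|_p^p\right),$$ where $C(n,p)>0$ is independent of $k$.
   Context: Let $e_1=(1,0,\dots,0)$ and $J^1_{s,p}(u)=s(1-s)\int_{\mathbb R^n}\int_{\mathbb R}\frac{|u(x+he_1)-u(x)|^p}{|h|^{1+sp}}dh\,dx\in[0,\infty]$. $B_r$ denotes the open ball of radius $r$ centered at the origin. *)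

theory Defs
  imports "HOL-Analysis.Analysis"
begin

text \<open>Directional fractional Gagliardo-type energy along the unit vector e
  (in the paper e = e_1):
  J(u) = s(1-s) \<integral>_{R^n} \<integral>_R |u(x+he)-u(x)|^p / |h|^{1+sp} dh dx, valued in [0,\<infinity>].\<close>
definition J1 :: "'a::euclidean_space \<Rightarrow> real \<Rightarrow> real \<Rightarrow> ('a \<Rightarrow> real) \<Rightarrow> ennreal" where
  "J1 e s p u = ennreal (s * (1 - s)) *
     (\<integral>\<^sup>+ x. (\<integral>\<^sup>+ h. ennreal (\<bar>u (x + h *\<^sub>R e) - u x\<bar> powr p / \<bar>h\<bar> powr (1 + s * p))
        \<partial>(lebesgue :: real measure)) \<partial>lebesgue)"

definition Lp_pow :: "real \<Rightarrow> ('a::euclidean_space \<Rightarrow> real) \<Rightarrow> ennreal" where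
  "Lp_pow p u = (\<integral>\<^sup>+ x. ennreal (\<bar>u x\<bar> powr p) \<partial>lebesgue)"

end

theory Submission imports Defs begin

text \<open>Write the increment of \<open>\<eta>\<^sub>k u\<close> along \<open>h e\<close> as
  \<open>\<eta>\<^sub>k(x+he) (u(x+he) - u(x)) + (\<eta>\<^sub>k(x+he) - \<eta>\<^sub>k(x)) u(x)\<close>. Since \<open>0 \<le> \<eta> \<le> 1\<close> and \<open>\<eta>\<^sub>k\<close> is
  2-Lipschitz uniformly in \<open>k \<ge> 1\<close>, its modulus is at most \<open>|u(x+he) - u(x)| + 2 min(1,|h|) |u(x)|\<close>.
  The first term reproduces \<open>J(u)\<close>. In the second one the \<open>h\<close>-integral
  \<open>\<integral> min(1,|h|)^p |h|^(-1-sp) dh = 2/(p s (1-s))\<close> cancels the factor \<open>s(1-s)\<close>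
  and leaves \<open>(2/p) \<parallel>u\<parallel>\<^sub>p^p\<close>.\<close>

text \<open>For fixed \<open>x\<close>, \<open>h \<mapsto> u(x + h e)\<close> need not be Lebesgue measurable, so the
  additivity and homogeneity of \<open>\<integral>\<^sup>+\<close> below avoid measurability assumptions where possible.\<close>

lemma nn_integral_add_le:
  assumes f: "f \<in> borel_measurable M"
  shows "(\<integral>\<^sup>+x. f x + g x \<partial>M) \<le> (\<integral>\<^sup>+x. f x \<partial>M) + (\<integral>\<^sup>+x. g x \<partial>M)"
proof -
  have "integral\<^sup>S M t \<le> (\<integral>\<^sup>+x. f x \<partial>M) + (\<integral>\<^sup>+x. g x \<partial>M)"
    if t: "simple_function M t" "t \<le> (\<lambda>x. f x + g x)" for t
  proof -
    define r where "r x = (if f x = top then 0 else t x - f x)" for x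
    have r_measurable: "r \<in> borel_measurable M"
      unfolding r_def using f borel_measurable_simple_function[OF t(1)] by measurable
    have "t x \<le> f x + r x" for x
    proof (cases "f x \<le> t x")
      case True
      then show ?thesis unfolding r_def
        using ennreal_ineq_diff_add[OF True] by (auto simp: top_unique)
    next
      case False
      then show ?thesis by (metis add_increasing2 r_def le_cases zero_le)
    qed
    then have "integral\<^sup>S M t \<le> (\<integral>\<^sup>+x. f x + r x \<partial>M)"
      using t(1) by (auto simp flip: nn_integral_eq_simple_integral intro!: nn_integral_mono)
    also have "\<dots> = (\<integral>\<^sup>+x. f x \<partial>M) + (\<integral>\<^sup>+x. r x \<partial>M)"
      using f r_measurable by (intro nn_integral_add) auto
    also have "\<dots> \<le> (\<integral>\<^sup>+x. f x \<partial>M) + (\<integral>\<^sup>+x. g x \<partial>M)"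
    proof (intro add_left_mono nn_integral_mono)
      fix x
      have "t x \<le> f x + g x" using t(2) by (simp add: le_fun_def)
      then show "r x \<le> g x" unfolding r_def by (auto simp: ennreal_minus_le_iff add.commute)
    qed
    finally show ?thesis .
  qed
  then show ?thesis
    by (subst nn_integral_def) (auto intro!: SUP_least)
qed

lemma nn_integral_cmult_le:
  assumes "0 < r"
  shows "(\<integral>\<^sup>+x. ennreal r * f x \<partial>M) \<le> ennreal r * (\<integral>\<^sup>+x. f x \<partial>M)"
proof -
  have inverse: "ennreal r * ennreal (1/r) = 1"
    using assms by (simp flip: ennreal_mult)
  have "integral\<^sup>S M t \<le> ennreal r * (\<integral>\<^sup>+x. f x \<partial>M)"
    if t: "simple_function M t" "t \<le> (\<lambda>x. ennreal r * f x)" for t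
  proof -
    have "integral\<^sup>S M t = (\<integral>\<^sup>+x. t x \<partial>M)"
      using t(1) by (simp add: nn_integral_eq_simple_integral)
    also have "\<dots> = (\<integral>\<^sup>+x. ennreal r * (t x * ennreal (1/r)) \<partial>M)"
      using inverse by (simp add: mult.assoc[symmetric] mult.commute)
    also have "\<dots> = ennreal r * (\<integral>\<^sup>+x. t x * ennreal (1/r) \<partial>M)"
      using borel_measurable_simple_function[OF t(1)] by (intro nn_integral_cmult) auto
    also have "\<dots> \<le> ennreal r * (\<integral>\<^sup>+x. f x \<partial>M)"
    proof (intro mult_left_mono nn_integral_mono)
      fix x
      have "t x * ennreal (1/r) \<le> ennreal r * f x * ennreal (1/r)"
        using t(2) by (intro mult_right_mono) (auto simp: le_fun_def)
      also have "\<dots> = f x * (ennreal r * ennreal (1/r))" by (simp add: ac_simps)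
      also have "\<dots> = f x" using inverse by simp
      finally show "t x * ennreal (1/r) \<le> f x" .
    qed simp
    finally show ?thesis .
  qed
  then show ?thesis
    by (subst nn_integral_def) (auto intro!: SUP_least)
qed

lemma nn_integral_cmult_ennreal:
  assumes "0 \<le> r"
  shows "(\<integral>\<^sup>+x. ennreal r * f x \<partial>M) = ennreal r * (\<integral>\<^sup>+x. f x \<partial>M)"
proof (cases "r = 0")
  case False
  then have r: "0 < r" using assms by simp
  have inverse: "ennreal (1/r) * ennreal r = 1"
    using r by (simp flip: ennreal_mult)
  have "ennreal r * (\<integral>\<^sup>+x. f x \<partial>M) = ennreal r * (\<integral>\<^sup>+x. ennreal (1/r) * (ennreal r * f x) \<partial>M)"
    using inverse by (simp add: mult.assoc[symmetric])
  also have "\<dots> \<le> ennreal r * (ennreal (1/r) * (\<integral>\<^sup>+x. ennreal r * f x \<partial>M))"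
    using r by (intro mult_left_mono nn_integral_cmult_le) auto
  also have "\<dots> = (\<integral>\<^sup>+x. ennreal r * f x \<partial>M)"
    using inverse by (simp add: mult.assoc[symmetric] mult.commute)
  finally show ?thesis
    using nn_integral_cmult_le[OF r] by (intro antisym)
qed simp

lemma nn_integral_min_one_powr_kernel_le:
  fixes q r :: real
  assumes r: "0 < r" "r < q"
  shows "(\<integral>\<^sup>+h. ennreal (min 1 \<bar>h\<bar> powr q / \<bar>h\<bar> powr (1 + r)) \<partial>(lebesgue :: real measure))
           \<le> ennreal (2 * q / (r * (q - r)))"
proof -
  define Q where "Q h = ennreal (h powr (q - 1 - r)) * indicator {0..1} h
      + ennreal (h powr (-1 - r)) * indicator {1..} h" for h :: real
  have Q_measurable[measurable]: "Q \<in> borel_measurable borel" unfolding Q_def by measurable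
  have "ennreal (min 1 \<bar>h\<bar> powr q / \<bar>h\<bar> powr (1 + r)) \<le> Q \<bar>h\<bar>" for h :: real
  proof (cases "\<bar>h\<bar> \<le> 1")
    case True
    then have "min 1 \<bar>h\<bar> powr q / \<bar>h\<bar> powr (1 + r) = \<bar>h\<bar> powr (q - 1 - r)"
      by (cases "h = 0") (simp_all add: powr_diff[symmetric] algebra_simps)
    then show ?thesis using True by (simp add: Q_def)
  next
    case False
    then have "min 1 \<bar>h\<bar> powr q / \<bar>h\<bar> powr (1 + r) = \<bar>h\<bar> powr (-1 - r)"
      by (simp add: powr_minus_divide[symmetric] powr_minus)
    then show ?thesis using False by (simp add: Q_def)
  qed
  also have "Q \<bar>h\<bar> \<le> Q h + Q (-h)" for h
    by (cases "h \<ge> 0") (auto simp: Q_def)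
  finally have pointwise: "ennreal (min 1 \<bar>h\<bar> powr q / \<bar>h\<bar> powr (1 + r)) \<le> Q h + Q (-h)"
    for h .
  have "(\<integral>\<^sup>+h. Q h \<partial>lborel) = (\<integral>\<^sup>+h. ennreal (h powr (q - 1 - r)) * indicator {0..1} h \<partial>lborel)
      + (\<integral>\<^sup>+h. ennreal (h powr (-1 - r)) * indicator {1..} h \<partial>lborel)"
    unfolding Q_def by (rule nn_integral_add) auto
  also have "\<dots> = ennreal (1 / (q - r)) + ennreal (1 / r)"
    using nn_integral_has_integral_lebesgue'[OF _ has_integral_powr_from_0[of "q - 1 - r" 1]]
      nn_integral_has_integral_lebesgue'[OF _ has_integral_powr_to_inf[of "-1 - r" 1]] r
    by simp
  also have "\<dots> = ennreal (q / (r * (q - r)))"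
    using r by (subst ennreal_plus[symmetric]) (auto simp: field_simps)
  finally have half: "(\<integral>\<^sup>+h. Q h \<partial>lborel) = ennreal (q / (r * (q - r)))" .
  have reflected: "(\<integral>\<^sup>+h. Q (-h) \<partial>lborel) = (\<integral>\<^sup>+h. Q h \<partial>lborel)"
    by (subst lborel_distr_uminus[symmetric], subst nn_integral_distr) auto
  have "(\<integral>\<^sup>+h. ennreal (min 1 \<bar>h\<bar> powr q / \<bar>h\<bar> powr (1 + r)) \<partial>(lebesgue :: real measure))
      \<le> (\<integral>\<^sup>+h. Q h + Q (-h) \<partial>lborel)"
    by (simp add: nn_integral_completion nn_integral_mono pointwise)
  also have "\<dots> = ennreal (q / (r * (q - r))) + ennreal (q / (r * (q - r)))"
    by (subst nn_integral_add) (auto simp: reflected half)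
  also have "\<dots> = ennreal (2 * q / (r * (q - r)))"
    using r by (subst ennreal_plus[symmetric]) auto
  finally show ?thesis .
qed

lemma powr_add_le_two_powr:
  fixes a b p :: real
  assumes "0 \<le> a" "0 \<le> b" "0 \<le> p"
  shows "(a + b) powr p \<le> 2 powr p * (a powr p + b powr p)"
proof -
  have "(a + b) powr p \<le> (2 * max a b) powr p"
    using assms by (intro powr_mono2) auto
  also have "\<dots> = 2 powr p * max a b powr p"
    using assms by (simp add: powr_mult)
  also have "max a b powr p \<le> a powr p + b powr p"
    by (cases "a \<le> b") (auto simp: max_def)
  finally show ?thesis by simp
qed

lemma gradient_bound_imp_lipschitz:
  fixes f :: "'a::euclidean_space \<Rightarrow> real"
  assumes "\<And>x. (f has_derivative (\<lambda>h. f' x \<bullet> h)) (at x)"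
    and "\<And>x. norm (f' x) \<le> B"
  shows "\<bar>f y - f z\<bar> \<le> B * norm (y - z)"
proof -
  have "norm (f y - f z) \<le> B * norm (y - z)"
  proof (rule differentiable_bound[where S = UNIV and f' = "\<lambda>x h. f' x \<bullet> h"])
    fix x :: 'a
    show "(f has_derivative (\<lambda>h. f' x \<bullet> h)) (at x within UNIV)" using assms(1) by simp
    have "onorm (\<lambda>h. f' x \<bullet> h) \<le> norm (f' x) * onorm (\<lambda>h::'a. h)"
      using onorm_inner_right[of "\<lambda>h::'a. h" "f' x"] by simp
    then show "onorm (\<lambda>h. f' x \<bullet> h) \<le> B" using assms(2)[of x] by (simp add: onorm_id)
  qed auto
  then show ?thesis by simp
qed

lemma rescaled_cutoff_increment_le:
  fixes \<eta> :: "'a::euclidean_space \<Rightarrow> real"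
  assumes "\<And>x. (\<eta> has_derivative (\<lambda>h. \<eta>' x \<bullet> h)) (at x)" "\<And>x. norm (\<eta>' x) \<le> 2"
    and "\<And>x. 0 \<le> \<eta> x \<and> \<eta> x \<le> 1"
    and "1 \<le> k" "norm e = 1"
  shows "\<bar>\<eta> ((1 / real k) *\<^sub>R (x + h *\<^sub>R e)) - \<eta> ((1 / real k) *\<^sub>R x)\<bar> \<le> 2 * min 1 \<bar>h\<bar>"
proof -
  have "norm ((1 / real k) *\<^sub>R (x + h *\<^sub>R e) - (1 / real k) *\<^sub>R x) = \<bar>h\<bar> / real k"
    using assms(5) by (simp add: algebra_simps)
  also have "\<dots> \<le> \<bar>h\<bar>"
    using assms(4) by (simp add: divide_le_eq mult_le_cancel_left1)
  finally show ?thesis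
    using gradient_bound_imp_lipschitz[OF assms(1,2), of "(1 / real k) *\<^sub>R (x + h *\<^sub>R e)"
        "(1 / real k) *\<^sub>R x"]
      assms(3)[of "(1 / real k) *\<^sub>R (x + h *\<^sub>R e)"] assms(3)[of "(1 / real k) *\<^sub>R x"]
    by (auto simp: min_def)
qed

lemma product_increment_powr_le:
  fixes a a' v v' m p :: real
  assumes "0 \<le> a'" "a' \<le> 1" "\<bar>a' - a\<bar> \<le> 2 * m" "0 \<le> p"
  shows "\<bar>a' * v' - a * v\<bar> powr p \<le> 4 powr p * (\<bar>v' - v\<bar> powr p + m powr p * \<bar>v\<bar> powr p)"
proof -
  have m: "0 \<le> m" using assms(3) by linarith
  have "a' * v' - a * v = a' * (v' - v) + (a' - a) * v"
    by (simp add: algebra_simps)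
  also have "\<bar>\<dots>\<bar> \<le> \<bar>v' - v\<bar> + 2 * m * \<bar>v\<bar>"
  proof -
    have "\<bar>a' * (v' - v)\<bar> \<le> \<bar>v' - v\<bar>"
      using assms(1,2) by (simp add: abs_mult mult_left_le_one_le)
    moreover have "\<bar>(a' - a) * v\<bar> \<le> 2 * m * \<bar>v\<bar>"
      using assms(3) by (simp add: abs_mult mult_right_mono)
    ultimately show ?thesis by (meson abs_triangle_ineq add_mono order_trans)
  qed
  finally have "\<bar>a' * v' - a * v\<bar> powr p \<le> (\<bar>v' - v\<bar> + 2 * m * \<bar>v\<bar>) powr p"
    using assms(4) by (intro powr_mono2) auto
  also have "\<dots> \<le> 2 powr p * (\<bar>v' - v\<bar> powr p + (2 * m * \<bar>v\<bar>) powr p)"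
    using m assms(4) by (intro powr_add_le_two_powr) auto
  also have "\<dots> = 2 powr p * \<bar>v' - v\<bar> powr p + 4 powr p * (m powr p * \<bar>v\<bar> powr p)"
    using m by (simp add: powr_mult algebra_simps flip: powr_mult[of 2 2])
  also have "\<dots> \<le> 4 powr p * (\<bar>v' - v\<bar> powr p + m powr p * \<bar>v\<bar> powr p)"
    using assms(4) powr_mono2[of p 2 4] by (simp add: distrib_left mult_right_mono)
  finally show ?thesis .
qed

lemma nn_integral_increment_kernel_le:
  fixes dv du :: "real \<Rightarrow> real"
  assumes s: "0 < s" "s < 1" and p: "0 < p" and K: "0 \<le> K" and a: "0 \<le> a"
    and increment: "\<And>h. \<bar>dv h\<bar> powr p \<le> K * (\<bar>du h\<bar> powr p + min 1 \<bar>h\<bar> powr p * a)"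
  shows "(\<integral>\<^sup>+h. ennreal (\<bar>dv h\<bar> powr p / \<bar>h\<bar> powr (1 + s * p)) \<partial>lebesgue)
    \<le> ennreal K * (ennreal (2 / (p * s * (1 - s)) * a)
      + (\<integral>\<^sup>+h. ennreal (\<bar>du h\<bar> powr p / \<bar>h\<bar> powr (1 + s * p)) \<partial>lebesgue))"
proof -
  define G where "G h = min 1 \<bar>h\<bar> powr p / \<bar>h\<bar> powr (1 + s * p)" for h :: real
  define Du where "Du h = \<bar>du h\<bar> powr p / \<bar>h\<bar> powr (1 + s * p)" for h :: real
  have G_nonneg: "0 \<le> G h" and Du_nonneg: "0 \<le> Du h" for h
    unfolding G_def Du_def by simp_all
  have "(\<integral>\<^sup>+h. ennreal (G h) \<partial>lebesgue) \<le> ennreal (2 * p / (s * p * (p - s * p)))"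
    unfolding G_def using s p by (intro nn_integral_min_one_powr_kernel_le) auto
  also have "2 * p / (s * p * (p - s * p)) = 2 / (p * s * (1 - s))"
    using s p by (simp add: field_simps)
  finally have kernel: "(\<integral>\<^sup>+h. ennreal (G h) \<partial>lebesgue) \<le> ennreal (2 / (p * s * (1 - s)))" .
  have "ennreal (\<bar>dv h\<bar> powr p / \<bar>h\<bar> powr (1 + s * p)) \<le> ennreal K * (ennreal (a * G h) + ennreal (Du h))"
    for h
  proof -
    have "\<bar>dv h\<bar> powr p / \<bar>h\<bar> powr (1 + s * p)
        \<le> K * (\<bar>du h\<bar> powr p + min 1 \<bar>h\<bar> powr p * a) / \<bar>h\<bar> powr (1 + s * p)"
      using increment by (rule divide_right_mono) simp
    also have "\<dots> = K * (a * G h + Du h)"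
      unfolding G_def Du_def by (simp add: add_divide_distrib algebra_simps)
    finally have "ennreal (\<bar>dv h\<bar> powr p / \<bar>h\<bar> powr (1 + s * p)) \<le> ennreal (K * (a * G h + Du h))"
      by (rule ennreal_leI)
    also have "\<dots> = ennreal K * (ennreal (a * G h) + ennreal (Du h))"
      using K a G_nonneg[of h] Du_nonneg[of h] by (simp add: ennreal_mult' ennreal_plus)
    finally show ?thesis .
  qed
  then have "(\<integral>\<^sup>+h. ennreal (\<bar>dv h\<bar> powr p / \<bar>h\<bar> powr (1 + s * p)) \<partial>lebesgue)
      \<le> ennreal K * (\<integral>\<^sup>+h. ennreal (a * G h) + ennreal (Du h) \<partial>lebesgue)"
    by (simp add: nn_integral_mono nn_integral_cmult_ennreal[OF K, symmetric])
  also have "\<dots> \<le> ennreal K * ((\<integral>\<^sup>+h. ennreal (a * G h) \<partial>lebesgue) + (\<integral>\<^sup>+h. ennreal (Du h) \<partial>lebesgue))"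
    by (intro mult_left_mono nn_integral_add_le measurable_completion) (auto simp: G_def)
  also have "(\<integral>\<^sup>+h. ennreal (a * G h) \<partial>lebesgue) = ennreal a * (\<integral>\<^sup>+h. ennreal (G h) \<partial>lebesgue)"
    using a by (simp add: ennreal_mult' nn_integral_cmult_ennreal)
  also have "\<dots> \<le> ennreal a * ennreal (2 / (p * s * (1 - s)))"
    by (rule mult_left_mono[OF kernel]) simp
  also have "\<dots> = ennreal (2 / (p * s * (1 - s)) * a)"
    using a by (subst ennreal_mult'') (simp_all add: mult.commute)
  finally show ?thesis
    unfolding Du_def by (simp add: add_right_mono mult_left_mono)
qed

lemma J1_le_of_increment_bound:
  fixes u v :: "'a::euclidean_space \<Rightarrow> real"
  assumes u[measurable]: "u \<in> borel_measurable lebesgue"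
    and s: "0 < s" "s < 1" and p: "0 < p" and K: "0 \<le> K"
    and increment: "\<And>x h. \<bar>v (x + h *\<^sub>R e) - v x\<bar> powr p
      \<le> K * (\<bar>u (x + h *\<^sub>R e) - u x\<bar> powr p + min 1 \<bar>h\<bar> powr p * \<bar>u x\<bar> powr p)"
  shows "J1 e s p v \<le> ennreal K * (J1 e s p u + ennreal (2 / p) * Lp_pow p u)"
proof -
  define c where "c = 2 / (p * s * (1 - s))"
  define D where "D x = (\<integral>\<^sup>+h. ennreal (\<bar>u (x + h *\<^sub>R e) - u x\<bar> powr p / \<bar>h\<bar> powr (1 + s * p))
    \<partial>(lebesgue :: real measure))" for x
  have c_nonneg: "0 \<le> c" unfolding c_def using s p by simp
  have Lp: "(\<integral>\<^sup>+x. ennreal (c * \<bar>u x\<bar> powr p) \<partial>lebesgue) = ennreal c * Lp_pow p u"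
    unfolding Lp_pow_def using c_nonneg by (simp add: ennreal_mult' nn_integral_cmult_ennreal)
  have "J1 e s p v \<le> ennreal (s * (1 - s))
      * (\<integral>\<^sup>+x. ennreal K * (ennreal (c * \<bar>u x\<bar> powr p) + D x) \<partial>lebesgue)"
    unfolding J1_def c_def D_def
    by (intro mult_left_mono nn_integral_mono nn_integral_increment_kernel_le s p K increment) auto
  also have "\<dots> \<le> ennreal (s * (1 - s))
      * (ennreal K * (ennreal c * Lp_pow p u + (\<integral>\<^sup>+x. D x \<partial>lebesgue)))"
    unfolding nn_integral_cmult_ennreal[OF K] Lp[symmetric]
    by (intro mult_left_mono nn_integral_add_le) auto
  also have "\<dots> = ennreal K * (J1 e s p u + ennreal (s * (1 - s)) * ennreal c * Lp_pow p u)"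
    unfolding J1_def D_def by (simp add: algebra_simps)
  also have "ennreal (s * (1 - s)) * ennreal c = ennreal (2 / p)"
    unfolding c_def using s p by (simp flip: ennreal_mult add: field_simps)
  finally show ?thesis .
qed

lemma J1_cutoff_product_le:
  fixes \<eta> :: "'a::euclidean_space \<Rightarrow> real"
  assumes deriv: "\<And>x. (\<eta> has_derivative (\<lambda>h. \<eta>' x \<bullet> h)) (at x)"
    and deriv_bound: "\<And>x. norm (\<eta>' x) \<le> 2"
    and range: "\<And>x. 0 \<le> \<eta> x \<and> \<eta> x \<le> 1"
    and k: "1 \<le> k" and e: "norm e = 1"
    and u: "u \<in> borel_measurable lebesgue" and s: "0 < s" "s < 1" and p: "0 < p"
  shows "J1 e s p (\<lambda>x. \<eta> ((1 / real k) *\<^sub>R x) * u x)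
    \<le> ennreal (4 powr p) * (J1 e s p u + ennreal (2 / p) * Lp_pow p u)"
proof (rule J1_le_of_increment_bound[OF u s p])
  fix x h
  show "\<bar>\<eta> ((1 / real k) *\<^sub>R (x + h *\<^sub>R e)) * u (x + h *\<^sub>R e) - \<eta> ((1 / real k) *\<^sub>R x) * u x\<bar> powr p
      \<le> 4 powr p * (\<bar>u (x + h *\<^sub>R e) - u x\<bar> powr p + min 1 \<bar>h\<bar> powr p * \<bar>u x\<bar> powr p)"
    using product_increment_powr_le[OF _ _ rescaled_cutoff_increment_le[OF deriv deriv_bound range k e]]
      range p by simp
qed simp

theorem lemma2p4:
  fixes p :: real
  assumes "1 < p"
  shows "\<exists>C>0. \<forall>(\<eta> :: 'a::euclidean_space \<Rightarrow> real) (\<eta>' :: 'a \<Rightarrow> 'a) (s :: real) (u :: 'a \<Rightarrow> real) (k :: nat) (e :: 'a).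
     e \<in> Basis \<longrightarrow>
     (\<forall>x. (\<eta> has_derivative (\<lambda>h. \<eta>' x \<bullet> h)) (at x)) \<longrightarrow> continuous_on UNIV \<eta>' \<longrightarrow>
     (\<forall>x\<in>ball 0 1. \<eta> x = 1) \<longrightarrow> (\<forall>x. x \<notin> ball 0 2 \<longrightarrow> \<eta> x = 0) \<longrightarrow>
     (\<forall>x. 0 \<le> \<eta> x \<and> \<eta> x \<le> 1) \<longrightarrow> (\<forall>x. norm (\<eta>' x) \<le> 2) \<longrightarrow>
     0 < s \<longrightarrow> s < 1 \<longrightarrow>
     u \<in> borel_measurable lebesgue \<longrightarrow> Lp_pow p u < \<infinity> \<longrightarrow>
     1 \<le> k \<longrightarrow>
     J1 e s p (\<lambda>x. \<eta> ((1 / real k) *\<^sub>R x) * u x) \<le> ennreal C * (J1 e s p u + Lp_pow p u)"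
proof -
  have p: "0 < p" using assms by simp
  have rearrange: "ennreal (4 powr p) * (J + ennreal (2 / p) * L)
      \<le> ennreal (4 powr p * (1 + 2 / p)) * (J + L)" for J L
  proof -
    have "J + ennreal (2 / p) * L \<le> (1 + ennreal (2 / p)) * (J + L)"
      by (simp add: algebra_simps add_increasing2 add_mono)
    then show ?thesis
      using p by (simp add: ennreal_mult ennreal_plus[symmetric] mult.assoc mult_left_mono)
  qed
  show ?thesis
    using p by (intro exI[of _ "4 powr p * (1 + 2 / p)"] conjI allI impI
        order_trans[OF J1_cutoff_product_le rearrange]) (auto simp: add_pos_pos)
qed

end
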